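(* Let $d \geq 3$, let $C \subset \mathbb{R}^d$ be a smooth $d$-dimensional combinatorial cube with faces labeled $F_I^J$ via a fixed face-poset isomorphism with $[0,1]^d$, and fix $x,y \in \{1,\dots,d\}$ with $x \neq y$. Consider the four $(d-2)$-dimensional faces $F_{xy}, F_{x\bar y}, F_{\bar x y}, F_{\bar x \bar y}$. If three of them are parallel to each other, then the fourth is parallel to them as well.
   Context: A lattice polytope is the convex hull of finitely many points of $\mathbb{Z}^d$. A $d$-dimensional polytope is simple if each vertex lies in exactly $d$ edges; the primitive edge directions at a vertex are the smallest lattice vectors along its incident edges; a $d$-dimensional lattice polytope in $\mathbb{R}^d$ is smooth if it is simple and at every vertex the primitive edge directions form a basis of $\mathbb{Z}^d$. A $d$-dimensional combinatorial cube is a polytope $C$ whose face poset is isomorphic to that of $[0,1]^d$. For disjoint $I,J \subseteq \{1,\dots,d\}$ the face of $[0,1]^d$ given by $x_k=0$ for $k\in I$ and $x_k = 1$ for $k \in J$ is denoted $F_I^J$, and the corresponding face of $C$ is also denoted $F_I^J$. Elements of $J$ are written with a bar and elements of $I$ without, e.g. $F_{x\bar y} = F_{\{x\}}^{\{y\}}$, $F_{\bar x\bar y} = F_{\emptyset}^{\{x,y\}}$. Two faces $F,G$ are parallel if $\mathrm{lin}(F)=\mathrm{lin}(G)$, where $\mathrm{lin}(F)$ is the linear subspace parallel to the affine hull of $F$. *)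

theory Defs
  imports "HOL-Analysis.Analysis"
begin

text \<open>Points of \<real>^d are modelled as real^'n with d = CARD('n); coordinates are indexed by 'n.\<close>

definition integral_vec :: "real^'n \<Rightarrow> bool" where
  "integral_vec v \<longleftrightarrow> (\<forall>i. v $ i \<in> \<int>)"

definition lattice_polytope :: "(real^'n) set \<Rightarrow> bool" where
  "lattice_polytope P \<longleftrightarrow> (\<exists>S. finite S \<and> (\<forall>v\<in>S. integral_vec v) \<and> P = convex hull S)"

definition is_vertex :: "(real^'n) set \<Rightarrow> real^'n \<Rightarrow> bool" where
  "is_vertex P v \<longleftrightarrow> {v} face_of P"

definition is_edge :: "(real^'n) set \<Rightarrow> (real^'n) set \<Rightarrow> bool" where
  "is_edge P E \<longleftrightarrow> E face_of P \<and> aff_dim E = 1"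

definition simple_polytope :: "(real^'n) set \<Rightarrow> bool" where
  "simple_polytope P \<longleftrightarrow> polytope P \<and> aff_dim P = int CARD('n) \<and>
     (\<forall>v. is_vertex P v \<longrightarrow> card {E. is_edge P E \<and> v \<in> E} = CARD('n))"

definition primitive_edge_dir :: "real^'n \<Rightarrow> (real^'n) set \<Rightarrow> real^'n \<Rightarrow> bool" where
  "primitive_edge_dir v E u \<longleftrightarrow> u \<noteq> 0 \<and> integral_vec u \<and> (\<exists>t>0. v + t *\<^sub>R u \<in> E) \<and>
     (\<forall>c. 0 < c \<and> c < 1 \<longrightarrow> \<not> integral_vec (c *\<^sub>R u))"

definition primitive_edge_dirs :: "(real^'n) set \<Rightarrow> real^'n \<Rightarrow> (real^'n) set" where
  "primitive_edge_dirs P v = {u. \<exists>E. is_edge P E \<and> v \<in> E \<and> primitive_edge_dir v E u}"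

definition lattice_basis :: "(real^'n) set \<Rightarrow> bool" where
  "lattice_basis D \<longleftrightarrow> finite D \<and> card D = CARD('n) \<and> independent D \<and> (\<forall>u\<in>D. integral_vec u) \<and>
     (\<forall>z. integral_vec z \<longrightarrow> (\<exists>c::real^'n \<Rightarrow> int. z = (\<Sum>u\<in>D. of_int (c u) *\<^sub>R u)))"

definition smooth_polytope :: "(real^'n) set \<Rightarrow> bool" where
  "smooth_polytope P \<longleftrightarrow> lattice_polytope P \<and> simple_polytope P \<and>
     (\<forall>v. is_vertex P v \<longrightarrow> lattice_basis (primitive_edge_dirs P v))"

definition unit_cube :: "(real^'n) set" where
  "unit_cube = {x. \<forall>i. 0 \<le> x $ i \<and> x $ i \<le> 1}"

definition cube_face :: "'n set \<Rightarrow> 'n set \<Rightarrow> (real^'n) set" where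
  "cube_face I J = {x \<in> unit_cube. (\<forall>k\<in>I. x $ k = 0) \<and> (\<forall>k\<in>J. x $ k = 1)}"

definition face_poset_iso :: "((real^'n) set \<Rightarrow> (real^'n) set) \<Rightarrow> (real^'n) set \<Rightarrow> bool" where
  "face_poset_iso \<phi> P \<longleftrightarrow> bij_betw \<phi> {F. F face_of unit_cube} {F. F face_of P} \<and>
     (\<forall>F G. F face_of unit_cube \<longrightarrow> G face_of unit_cube \<longrightarrow> (\<phi> F \<subseteq> \<phi> G \<longleftrightarrow> F \<subseteq> G))"

definition combinatorial_cube :: "(real^'n) set \<Rightarrow> bool" where
  "combinatorial_cube P \<longleftrightarrow> polytope P \<and> (\<exists>\<phi>. face_poset_iso \<phi> P)"

definition lin_face :: "(real^'n) set \<Rightarrow> (real^'n) set" where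
  "lin_face F = span {a - b | a b. a \<in> F \<and> b \<in> F}"

definition parallel_faces :: "(real^'n) set \<Rightarrow> (real^'n) set \<Rightarrow> bool" where
  "parallel_faces F G \<longleftrightarrow> lin_face F = lin_face G"

end

theory Submission
  imports Defs
begin

text \<open>
  If the diagonal faces F_{x\bar y} and F_{\bar x y} have the same linear space L, then L lies in
  lin F_{\bar x} and in lin F_{\bar y}, because F_{\bar x y} is contained in the facet F_{\bar x} and
  F_{x\bar y} in F_{\bar y}. Two distinct proper faces of a convex set through a common point have
  distinct linear spaces of dimension less than d, so these two meet in a space of dimension at most
  d - 2. A face of the cube with k free coordinates sits on top of a strict chain of k + 1 nonempty
  faces, so its image has dimension at least k; thus both L and lin F_{\bar x\bar y} are subspaces of
  dimension at least d - 2 of that intersection, hence equal to it. Likewise L = lin F_{xy}, and the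
  other diagonal pair is symmetric.
\<close>

lemma subspace_lin_face: "subspace (lin_face F)"
  unfolding lin_face_def by (rule subspace_span)

lemma lin_face_mono: "F \<subseteq> G \<Longrightarrow> lin_face F \<subseteq> lin_face G"
  unfolding lin_face_def by (rule span_mono) blast

lemma lin_face_eq_span_translation:
  assumes "a \<in> S"
  shows "lin_face S = span ((\<lambda>x. x - a) ` S)"
proof
  have "{u - v |u v. u \<in> S \<and> v \<in> S} \<subseteq> span ((\<lambda>x. x - a) ` S)"
  proof clarify
    fix u v assume "u \<in> S" "v \<in> S"
    then have "(u - a) - (v - a) \<in> span ((\<lambda>x. x - a) ` S)"
      by (intro span_diff span_base) auto
    then show "u - v \<in> span ((\<lambda>x. x - a) ` S)" by simp
  qed
  then show "lin_face S \<subseteq> span ((\<lambda>x. x - a) ` S)"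
    unfolding lin_face_def by (rule span_minimal) (rule subspace_span)
  show "span ((\<lambda>x. x - a) ` S) \<subseteq> lin_face S"
    unfolding lin_face_def using assms by (intro span_mono) blast
qed

lemma aff_dim_eq_dim_lin_face: "a \<in> S \<Longrightarrow> aff_dim S = int (dim (lin_face S))"
  by (simp add: aff_dim_eq_dim_subtract hull_inc lin_face_eq_span_translation)

lemma affine_hull_eq_translation_lin_face: "a \<in> S \<Longrightarrow> affine hull S = (+) a ` lin_face S"
  using affine_hull_span_gen[of a S] by (simp add: hull_inc lin_face_eq_span_translation)

lemma face_of_eq_if_lin_face_eq:
  fixes A B C :: "(real^'n) set"
  assumes "convex C" "A face_of C" "B face_of C" "a \<in> A" "a \<in> B" "lin_face A = lin_face B"
  shows "A = B"
proof -
  have "affine hull A = affine hull B"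
    using assms(4-6) by (simp add: affine_hull_eq_translation_lin_face)
  then show ?thesis
    using face_of_imp_eq_affine_Int assms(1-3) by metis
qed

lemma dim_Int_less_max:
  fixes S T :: "'a::euclidean_space set"
  assumes "subspace S" "subspace T" "S \<noteq> T"
  shows "dim (S \<inter> T) < max (dim S) (dim T)"
proof (rule ccontr)
  assume "\<not> ?thesis"
  then have "S \<inter> T = S" "S \<inter> T = T"
    using assms by (simp_all add: subspace_dim_equal subspace_inter)
  then show False using assms(3) by blast
qed

lemma subspace_eq_lin_face_Int:
  fixes A B C L :: "(real^'n) set"
  assumes C: "convex C" and faces: "A face_of C" "B face_of C"
    and proper: "A \<noteq> C" "B \<noteq> C" and "A \<noteq> B" and a: "a \<in> A" "a \<in> B"
    and L: "subspace L" "L \<subseteq> lin_face A \<inter> lin_face B" "aff_dim C \<le> int (dim L) + 2"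
  shows "L = lin_face A \<inter> lin_face B"
proof -
  have "int (dim (lin_face A)) < aff_dim C" "int (dim (lin_face B)) < aff_dim C"
    using face_of_aff_dim_lt[OF C] faces proper a by (metis aff_dim_eq_dim_lin_face)+
  moreover have "lin_face A \<noteq> lin_face B"
    using face_of_eq_if_lin_face_eq[OF C faces a] \<open>A \<noteq> B\<close> by blast
  then have "dim (lin_face A \<inter> lin_face B) < max (dim (lin_face A)) (dim (lin_face B))"
    by (simp add: dim_Int_less_max subspace_lin_face)
  ultimately have "dim (lin_face A \<inter> lin_face B) \<le> dim L"
    using L(3) by linarith
  then show ?thesis
    using L by (intro subspace_dim_equal subspace_inter subspace_lin_face) auto
qed

definition cube_vertex :: "'n set \<Rightarrow> real^'n" where
  "cube_vertex K = (\<chi> i. if i \<in> K then 1 else 0)"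

lemma cube_vertex_in_cube_face_iff: "cube_vertex K \<in> cube_face I J \<longleftrightarrow> I \<inter> K = {} \<and> J \<subseteq> K"
  unfolding cube_face_def unit_cube_def cube_vertex_def by auto

lemma cube_face_mono: "I' \<subseteq> I \<Longrightarrow> J' \<subseteq> J \<Longrightarrow> cube_face I J \<subseteq> cube_face I' J'"
  unfolding cube_face_def by auto

lemma cube_face_subset_iff:
  assumes "I \<inter> J = {}"
  shows "cube_face I J \<subseteq> cube_face I' J' \<longleftrightarrow> I' \<subseteq> I \<and> J' \<subseteq> J"
proof
  assume sub: "cube_face I J \<subseteq> cube_face I' J'"
  have "cube_vertex J \<in> cube_face I J" "cube_vertex (- I) \<in> cube_face I J"
    using assms by (auto simp: cube_vertex_in_cube_face_iff)
  then have "cube_vertex J \<in> cube_face I' J'" "cube_vertex (- I) \<in> cube_face I' J'"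
    using sub by blast+
  then show "I' \<subseteq> I \<and> J' \<subseteq> J"
    unfolding cube_vertex_in_cube_face_iff by blast
qed (simp add: cube_face_mono)

lemma cube_face_eq_iff:
  "I \<inter> J = {} \<Longrightarrow> I' \<inter> J' = {} \<Longrightarrow> cube_face I J = cube_face I' J' \<longleftrightarrow> I = I' \<and> J = J'"
  by (metis cube_face_subset_iff subset_antisym order_refl)

lemma cube_face_empty_empty: "cube_face {} {} = unit_cube"
  by (simp add: cube_face_def)

lemma convex_unit_cube: "convex unit_cube"
proof -
  have "convex {t::real. 0 \<le> t \<and> t \<le> 1}"
    using convex_real_interval(5)[of 0 1] by (simp add: atLeastAtMost_def atLeast_def atMost_def Int_def)
  then show ?thesis
    unfolding unit_cube_def by (rule convex_box_cart)
qed

lemma cube_face_face_of_unit_cube: "cube_face I J face_of unit_cube"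
proof -
  have coordinate_face: "{x \<in> unit_cube. x $ k = c} face_of unit_cube" if "c = 0 \<or> c = 1" for k c
  proof -
    have "{x \<in> unit_cube. x $ k = c} = unit_cube \<inter> {x. axis k 1 \<bullet> x = c}"
      by (auto simp: inner_axis')
    moreover have "0 \<le> axis k 1 \<bullet> x" "axis k 1 \<bullet> x \<le> 1" if "x \<in> unit_cube" for x
      using that by (simp_all add: inner_axis' unit_cube_def)
    ultimately show ?thesis
      using that convex_unit_cube
      by (metis face_of_Int_supporting_hyperplane_ge face_of_Int_supporting_hyperplane_le)
  qed
  have "cube_face I J = \<Inter> (insert unit_cube
      ((\<lambda>k. {x \<in> unit_cube. x $ k = 0}) ` I \<union> (\<lambda>k. {x \<in> unit_cube. x $ k = 1}) ` J))"
    unfolding cube_face_def by auto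
  also have "\<dots> face_of unit_cube"
    by (rule face_of_Inter) (auto intro: coordinate_face face_of_refl convex_unit_cube)
  finally show ?thesis .
qed

lemma card_Compl_doubleton:
  fixes x y :: "'a::finite"
  assumes "x \<noteq> y"
  shows "int (card (- {x, y})) = int CARD('a) - 2"
proof -
  have "card (- {x, y}) + card {x, y} = CARD('a)"
    using card_Un_disjoint[of "- {x, y}" "{x, y}"] by (simp add: Un_commute)
  then show ?thesis
    using assms by simp
qed

locale labelled_cube =
  fixes C :: "(real^'n) set" and \<phi> :: "(real^'n) set \<Rightarrow> (real^'n) set"
  assumes convex: "convex C" and iso: "face_poset_iso \<phi> C"
begin

lemma phi_bij: "bij_betw \<phi> {F. F face_of unit_cube} {F. F face_of C}"
  using iso unfolding face_poset_iso_def by (rule conjunct1)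

lemma phi_subset_iff: "F face_of unit_cube \<Longrightarrow> G face_of unit_cube \<Longrightarrow> \<phi> F \<subseteq> \<phi> G \<longleftrightarrow> F \<subseteq> G"
  using iso unfolding face_poset_iso_def by simp

lemma phi_eq_iff:
  assumes "F face_of unit_cube" "G face_of unit_cube"
  shows "\<phi> F = \<phi> G \<longleftrightarrow> F = G"
  using phi_subset_iff[OF assms] phi_subset_iff[OF assms(2,1)] by blast

lemma face_of_phi: "F face_of unit_cube \<Longrightarrow> \<phi> F face_of C"
  using bij_betwE[OF phi_bij] by simp

lemma phi_onto:
  assumes "F face_of C"
  obtains G where "G face_of unit_cube" "\<phi> G = F"
proof -
  have "F \<in> \<phi> ` {G. G face_of unit_cube}"
    using assms bij_betw_imp_surj_on[OF phi_bij] by simp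
  then show thesis
    using that by blast
qed

lemma phi_empty: "\<phi> {} = {}"
proof -
  obtain G where G: "G face_of unit_cube" "\<phi> G = {}"
    using phi_onto[OF empty_face_of] .
  then show ?thesis
    using phi_subset_iff[OF empty_face_of G(1)] by simp
qed

lemma phi_unit_cube: "\<phi> unit_cube = C"
proof -
  obtain G where G: "G face_of unit_cube" "\<phi> G = C"
    using phi_onto[OF face_of_refl[OF convex]] .
  have "C \<subseteq> \<phi> unit_cube"
    using G phi_subset_iff[OF G(1) face_of_refl[OF convex_unit_cube]] face_of_imp_subset[OF G(1)] by simp
  moreover have "\<phi> unit_cube \<subseteq> C"
    using face_of_phi[OF face_of_refl[OF convex_unit_cube]] by (rule face_of_imp_subset)
  ultimately show ?thesis by blast
qed

lemma aff_dim_phi_less: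
  assumes F: "F face_of unit_cube" and G: "G face_of unit_cube" and "F \<subset> G"
  shows "aff_dim (\<phi> F) < aff_dim (\<phi> G)"
proof -
  have "\<phi> F \<subseteq> \<phi> G"
    using phi_subset_iff[OF F G] \<open>F \<subset> G\<close> by blast
  then have "\<phi> F face_of \<phi> G"
    using face_of_subset[OF face_of_phi[OF F]] face_of_imp_subset[OF face_of_phi[OF G]] by blast
  moreover have "\<phi> F \<noteq> \<phi> G"
    using phi_eq_iff[OF F G] \<open>F \<subset> G\<close> by blast
  ultimately show ?thesis
    by (rule face_of_aff_dim_lt[OF face_of_imp_convex[OF face_of_phi[OF G]]])
qed

abbreviation face :: "'n set \<Rightarrow> 'n set \<Rightarrow> (real^'n) set" where
  "face I J \<equiv> \<phi> (cube_face I J)"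

lemma face_mono: "I' \<subseteq> I \<Longrightarrow> J' \<subseteq> J \<Longrightarrow> face I J \<subseteq> face I' J'"
  by (simp add: phi_subset_iff cube_face_face_of_unit_cube cube_face_mono)

lemma face_nonempty:
  assumes "I \<inter> J = {}"
  shows "face I J \<noteq> {}"
proof -
  have "cube_face I J \<noteq> {}"
    using assms cube_vertex_in_cube_face_iff[of J I J] by blast
  then show ?thesis
    using phi_eq_iff[OF cube_face_face_of_unit_cube empty_face_of] phi_empty by simp
qed

lemma aff_dim_face_ge: "I \<inter> J = {} \<Longrightarrow> int (card (- (I \<union> J))) \<le> aff_dim (face I J)"
proof (induction "card (- (I \<union> J))" arbitrary: I)
  case 0
  have "\<not> aff_dim (face I J) < 0"
    using face_nonempty[OF 0(2)] aff_dim_negative_iff by blast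
  then show ?case
    using "0"(1) by (metis not_less of_nat_0)
next
  case (Suc m)
  have "- (I \<union> J) \<noteq> {}"
    using Suc(2) by force
  then obtain k where k: "k \<notin> I" "k \<notin> J"
    by blast
  have "- (insert k I \<union> J) = - (I \<union> J) - {k}"
    by blast
  then have "card (- (insert k I \<union> J)) = m"
    using Suc(2) k by simp
  then have "int m \<le> aff_dim (face (insert k I) J)"
    using Suc.hyps(1)[of "insert k I"] Suc(3) k by simp
  moreover have "\<not> cube_face I J \<subseteq> cube_face (insert k I) J"
    using cube_face_subset_iff[OF Suc(3)] k by simp
  then have "cube_face (insert k I) J \<subset> cube_face I J"
    using cube_face_mono[of I "insert k I" J J] by blast
  then have "aff_dim (face (insert k I) J) < aff_dim (face I J)"
    by (intro aff_dim_phi_less cube_face_face_of_unit_cube)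
  ultimately show ?case
    using Suc(2) by linarith
qed

lemma dim_lin_face_codim2:
  assumes "x \<noteq> y" "I \<union> J = {x, y}" "I \<inter> J = {}"
  shows "int CARD('n) \<le> int (dim (lin_face (face I J))) + 2"
proof -
  obtain a where "a \<in> face I J"
    using face_nonempty[OF assms(3)] by blast
  then have "aff_dim (face I J) = int (dim (lin_face (face I J)))"
    by (rule aff_dim_eq_dim_lin_face)
  then show ?thesis
    using aff_dim_face_ge[OF assms(3)] card_Compl_doubleton[OF assms(1)] assms(2) by simp
qed

lemma subspace_eq_lin_face_codim2:
  assumes xy: "x \<noteq> y" "I \<union> J = {x, y}" "I \<inter> J = {}"
    and L: "subspace L" "int CARD('n) \<le> int (dim L) + 2"
      "L \<subseteq> lin_face (face (I \<inter> {x}) (J \<inter> {x}))" "L \<subseteq> lin_face (face (I \<inter> {y}) (J \<inter> {y}))"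
  shows "L = lin_face (face I J)"
proof -
  let ?A = "face (I \<inter> {x}) (J \<inter> {x})" and ?B = "face (I \<inter> {y}) (J \<inter> {y})"
  have disjoint: "I \<inter> {z} \<inter> (J \<inter> {z}) = {}" for z
    using xy(3) by blast
  have "x \<in> I \<union> J" "y \<in> I \<union> J"
    using xy(2) by auto
  then have "cube_face (I \<inter> {x}) (J \<inter> {x}) \<noteq> cube_face {} {}"
      "cube_face (I \<inter> {y}) (J \<inter> {y}) \<noteq> cube_face {} {}"
      "cube_face (I \<inter> {x}) (J \<inter> {x}) \<noteq> cube_face (I \<inter> {y}) (J \<inter> {y})"
    unfolding cube_face_eq_iff[OF disjoint Int_empty_left] cube_face_eq_iff[OF disjoint disjoint]
    using xy(1) by blast+
  then have proper: "?A \<noteq> C" "?B \<noteq> C" "?A \<noteq> ?B"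
    unfolding phi_unit_cube[symmetric] cube_face_empty_empty[symmetric]
    by (simp_all add: phi_eq_iff cube_face_face_of_unit_cube)
  have "face I J \<subseteq> ?A" "face I J \<subseteq> ?B"
    by (simp_all add: face_mono)
  moreover obtain a where "a \<in> face I J"
    using face_nonempty[OF xy(3)] by blast
  ultimately have a: "a \<in> ?A" "a \<in> ?B" and lin: "lin_face (face I J) \<subseteq> lin_face ?A \<inter> lin_face ?B"
    using lin_face_mono by blast+
  have faces: "?A face_of C" "?B face_of C"
    by (simp_all add: face_of_phi cube_face_face_of_unit_cube)
  have "aff_dim C \<le> int CARD('n)"
    using aff_dim_le_DIM[of C] by simp
  then have unique: "M = lin_face ?A \<inter> lin_face ?B"
    if "subspace M" "M \<subseteq> lin_face ?A \<inter> lin_face ?B" "int CARD('n) \<le> int (dim M) + 2" for M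
    using subspace_eq_lin_face_Int[OF convex faces proper a that(1,2)] that(3) by simp
  show ?thesis
    using unique[OF L(1)] unique[OF subspace_lin_face lin dim_lin_face_codim2[OF xy]] L(2-4) by simp
qed

lemma lin_face_codim2_diagonal:
  assumes xy: "x \<noteq> y" "I \<union> J = {x, y}" "I \<inter> J = {}"
    and diagonal: "lin_face (face I J) = lin_face (face J I)"
  shows "lin_face (face (I \<inter> {x} \<union> J \<inter> {y}) (J \<inter> {x} \<union> I \<inter> {y})) = lin_face (face I J)"
proof -
  \<comment> \<open>This face shares its x-facet with face I J and its y-facet with face J I.\<close>
  let ?I = "I \<inter> {x} \<union> J \<inter> {y}" and ?J = "J \<inter> {x} \<union> I \<inter> {y}"
  have xy': "?I \<union> ?J = {x, y}" "?I \<inter> ?J = {}"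
    using xy by auto
  have "?I \<inter> {x} = I \<inter> {x}" "?J \<inter> {x} = J \<inter> {x}" "?I \<inter> {y} = J \<inter> {y}" "?J \<inter> {y} = I \<inter> {y}"
    using xy by auto
  moreover have "lin_face (face I J) \<subseteq> lin_face (face (I \<inter> {x}) (J \<inter> {x}))"
    by (simp add: face_mono lin_face_mono)
  moreover have "lin_face (face I J) \<subseteq> lin_face (face (J \<inter> {y}) (I \<inter> {y}))"
    unfolding diagonal by (simp add: face_mono lin_face_mono)
  ultimately show ?thesis
    using subspace_eq_lin_face_codim2[OF xy(1) xy' subspace_lin_face dim_lin_face_codim2[OF xy]]
    by simp
qed

end

theorem corollary3p4:
  fixes C :: "(real^'n) set" and \<phi> :: "(real^'n) set \<Rightarrow> (real^'n) set" and x y :: 'n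
  assumes "CARD('n) \<ge> 3"
    and "smooth_polytope C"
    and "combinatorial_cube C"
    and "face_poset_iso \<phi> C"
    and "x \<noteq> y"
  defines "Fxy \<equiv> \<phi> (cube_face {x, y} {})"
    and "Fxy' \<equiv> \<phi> (cube_face {x} {y})"
    and "Fx'y \<equiv> \<phi> (cube_face {y} {x})"
    and "Fx'y' \<equiv> \<phi> (cube_face {} {x, y})"
  assumes "(parallel_faces Fxy' Fx'y \<and> parallel_faces Fxy' Fx'y' \<and> parallel_faces Fx'y Fx'y')
         \<or> (parallel_faces Fxy Fx'y \<and> parallel_faces Fxy Fx'y' \<and> parallel_faces Fx'y Fx'y')
         \<or> (parallel_faces Fxy Fxy' \<and> parallel_faces Fxy Fx'y' \<and> parallel_faces Fxy' Fx'y')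
         \<or> (parallel_faces Fxy Fxy' \<and> parallel_faces Fxy Fx'y \<and> parallel_faces Fxy' Fx'y)"
  shows "parallel_faces Fxy Fxy' \<and> parallel_faces Fxy Fx'y \<and> parallel_faces Fxy Fx'y'
       \<and> parallel_faces Fxy' Fx'y \<and> parallel_faces Fxy' Fx'y' \<and> parallel_faces Fx'y Fx'y'"
proof -
  interpret labelled_cube C \<phi>
    using assms(3,4) by unfold_locales (simp_all add: combinatorial_cube_def polytope_imp_convex)
  have xy: "x \<noteq> y" "y \<noteq> x"
    using assms(5) by simp_all
  have "lin_face Fxy = lin_face Fxy'" "lin_face Fx'y' = lin_face Fx'y"
    if "lin_face Fxy' = lin_face Fx'y"
    using lin_face_codim2_diagonal[of x y "{x}" "{y}"] lin_face_codim2_diagonal[of x y "{y}" "{x}"] that xy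
    unfolding Fxy_def Fxy'_def Fx'y_def Fx'y'_def by (simp_all add: insert_commute)
  moreover have "lin_face Fxy' = lin_face Fxy" "lin_face Fx'y = lin_face Fx'y'"
    if "lin_face Fxy = lin_face Fx'y'"
    using lin_face_codim2_diagonal[of x y "{x, y}" "{}"] lin_face_codim2_diagonal[of x y "{}" "{x, y}"] that xy
    unfolding Fxy_def Fxy'_def Fx'y_def Fx'y'_def by (simp_all add: insert_commute)
  \<comment> \<open>Any three of the four faces contain one of the two diagonal pairs.\<close>
  moreover have "lin_face Fxy' = lin_face Fx'y \<or> lin_face Fxy = lin_face Fx'y'"
    using assms(10) unfolding parallel_faces_def by blast
  ultimately show ?thesis
    unfolding parallel_faces_def by metis
qed

end
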